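(* Let $X$ be a real locally uniformly convex Banach space and let $\varphi$ be a gauge function. Then for every $R>0$ and every $x_0\in X$ there exists a nondecreasing function $\psi=\psi(R,x_0):[0,\infty)\to[0,\infty)$ such that $\psi(0)=0$, $\psi(r)>0$ for all $r>0$, and $$\langle x^*-x_0^*,\,x-x_0\rangle\ \ge\ \psi(\|x-x_0\|)\,\|x-x_0\|$$ for all $x\in X$ with $\|x-x_0\|\le R$, all $x^*\in J_\varphi x$ and all $x_0^*\in J_\varphi x_0$.
   Context: A real Banach space $X$ is locally uniformly convex if for every $x_0\in X$ with $\|x_0\|=1$ and every $\varepsilon\in(0,2]$ there is $\delta=\delta(\varepsilon,x_0)>0$ such that for all $x\in X$ with $\|x\|=1$ and $\|x-x_0\|\ge\varepsilon$ one has $\|x+x_0\|\le 2(1-\delta)$. A gauge function is a strictly increasing continuous function $\varphi:[0,\infty)\to[0,\infty)$ with $\varphi(0)=0$ and $\varphi(r)\to\infty$ as $r\to\infty$. The duality mapping corresponding to $\varphi$ is the (possibly multivalued) map $J_\varphi:X\to 2^{X^*}$, $J_\varphi x=\{x^*\in X^*:\langle x^*,x\rangle=\varphi(\|x\|)\|x\|,\ \|x^*\|=\varphi(\|x\|)\}$. *)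

theory Defs
  imports "HOL-Analysis.Analysis"
begin

text \<open>The dual space X* of a real Banach space X is modelled by bounded linear
functionals 'a =>L real (blinfun), with the operator norm; the pairing is function application.\<close>

definition locally_uniformly_convex :: "'a::banach itself \<Rightarrow> bool" where
  "locally_uniformly_convex TYPE('a) \<longleftrightarrow>
     (\<forall>x0::'a. norm x0 = 1 \<longrightarrow>
        (\<forall>\<epsilon>. 0 < \<epsilon> \<and> \<epsilon> \<le> 2 \<longrightarrow>
           (\<exists>\<delta>>0. \<forall>x::'a. norm x = 1 \<and> norm (x - x0) \<ge> \<epsilon> \<longrightarrow>
                 norm (x + x0) \<le> 2 * (1 - \<delta>))))"

definition gauge_function :: "(real \<Rightarrow> real) \<Rightarrow> bool" where
  "gauge_function \<phi> \<longleftrightarrow>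
     strict_mono_on {0..} \<phi> \<and> continuous_on {0..} \<phi> \<and>
     (\<forall>r\<ge>0. \<phi> r \<ge> 0) \<and> \<phi> 0 = 0 \<and> filterlim \<phi> at_top at_top"

definition duality_map :: "(real \<Rightarrow> real) \<Rightarrow> 'a::real_normed_vector \<Rightarrow> ('a \<Rightarrow>\<^sub>L real) set" where
  "duality_map \<phi> x = {xs. blinfun_apply xs x = \<phi> (norm x) * norm x \<and> norm xs = \<phi> (norm x)}"

end

theory Submission
  imports Defs
begin

(*
  For xs in J x and ys in J x0 the pairing <xs - ys, x - x0> is at least
    (phi |x| - phi |x0|) (|x| - |x0|) + (|x0| phi |x| + |x| phi |x0|) (2 - |sgn x + sgn x0|).
  If |x - x0| >= r, then either the norms of x and x0 differ by a fixed amount and the first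
  term is bounded below because phi is strictly increasing, or the directions sgn x and sgn x0
  are a fixed distance apart and local uniform convexity at sgn x0 bounds the second term below.
  So the pairing is at least some c(r) > 0 on {|x - x0| >= r}, and
  psi(t) = inf {pairing : |x - x0| >= t} / R is the required nondecreasing function.
*)

lemma gauge_function_less:
  assumes "gauge_function \<phi>" "0 \<le> s" "s < t"
  shows "\<phi> s < \<phi> t"
  using assms unfolding gauge_function_def by (auto intro: strict_mono_onD)

lemma gauge_function_le:
  assumes "gauge_function \<phi>" "0 \<le> s" "s \<le> t"
  shows "\<phi> s \<le> \<phi> t"
  using assms unfolding gauge_function_def by (auto intro: strict_mono_on_leD)

lemma gauge_function_pos:
  assumes "gauge_function \<phi>" "0 < t"
  shows "0 < \<phi> t"
  using gauge_function_less[OF assms(1), of 0 t] assms unfolding gauge_function_def by simp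

lemma gauge_function_nonneg:
  assumes "gauge_function \<phi>" "0 \<le> t"
  shows "0 \<le> \<phi> t"
  using assms unfolding gauge_function_def by simp

lemma gauge_function_diff_mult_nonneg:
  assumes "gauge_function \<phi>" "0 \<le> s" "0 \<le> t"
  shows "0 \<le> (\<phi> s - \<phi> t) * (s - t)"
proof (cases "s \<le> t")
  case True
  then show ?thesis using gauge_function_le[OF assms(1,2) True] by (simp add: mult_nonpos_nonpos)
next
  case False
  then show ?thesis using gauge_function_le[OF assms(1,3), of s] by simp
qed

lemma gauge_function_diff_mult_ge:
  assumes "gauge_function \<phi>" "0 \<le> s" "0 < \<eta>" "\<eta> \<le> t" "\<eta> \<le> \<bar>s - t\<bar>"
  shows "min (\<phi> (t + \<eta>) - \<phi> t) (\<phi> t - \<phi> (t - \<eta>)) * \<eta> \<le> (\<phi> s - \<phi> t) * (s - t)"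
proof (cases "t \<le> s")
  case True
  then have "\<phi> (t + \<eta>) \<le> \<phi> s" "\<eta> \<le> s - t"
    using gauge_function_le[OF assms(1), of "t + \<eta>" s] assms by auto
  moreover have "\<phi> t \<le> \<phi> (t + \<eta>)" using gauge_function_le[OF assms(1)] assms by simp
  ultimately show ?thesis using assms(3) by (intro mult_mono min.coboundedI1) auto
next
  case False
  then have "\<phi> s \<le> \<phi> (t - \<eta>)" "\<eta> \<le> t - s"
    using gauge_function_le[OF assms(1,2), of "t - \<eta>"] assms by auto
  moreover have "\<phi> (t - \<eta>) \<le> \<phi> t" using gauge_function_le[OF assms(1)] assms by simp
  ultimately have "min (\<phi> (t + \<eta>) - \<phi> t) (\<phi> t - \<phi> (t - \<eta>)) * \<eta> \<le> (\<phi> t - \<phi> s) * (t - s)"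
    using assms(3) by (intro mult_mono min.coboundedI2) auto
  then show ?thesis by (simp add: algebra_simps)
qed

lemma duality_map_apply_self:
  "xs \<in> duality_map \<phi> x \<Longrightarrow> blinfun_apply xs x = \<phi> (norm x) * norm x"
  unfolding duality_map_def by simp

lemma duality_map_apply_le:
  assumes "xs \<in> duality_map \<phi> x"
  shows "blinfun_apply xs y \<le> \<phi> (norm x) * norm y"
proof -
  have "blinfun_apply xs y \<le> norm xs * norm y" using norm_blinfun[of xs y] by simp
  then show ?thesis using assms unfolding duality_map_def by simp
qed

lemma duality_map_apply_sgn:
  assumes "xs \<in> duality_map \<phi> x" "x \<noteq> 0"
  shows "blinfun_apply xs (sgn x) = \<phi> (norm x)"
  using duality_map_apply_self[OF assms(1)] assms(2)
  by (simp add: sgn_div_norm blinfun.scaleR_right)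

lemma duality_map_zero:
  assumes "gauge_function \<phi>" "xs \<in> duality_map \<phi> 0"
  shows "xs = 0"
  using assms unfolding gauge_function_def duality_map_def by simp

lemma duality_map_monotone:
  assumes "xs \<in> duality_map \<phi> x" "ys \<in> duality_map \<phi> y"
  shows "(\<phi> (norm x) - \<phi> (norm y)) * (norm x - norm y) \<le> blinfun_apply (xs - ys) (x - y)"
  using duality_map_apply_self[OF assms(1)] duality_map_apply_self[OF assms(2)]
    duality_map_apply_le[OF assms(1), of y] duality_map_apply_le[OF assms(2), of x]
  by (simp add: blinfun.diff_left blinfun.diff_right algebra_simps)

lemma duality_map_monotone_sgn:
  assumes "xs \<in> duality_map \<phi> x" "ys \<in> duality_map \<phi> y" "x \<noteq> 0" "y \<noteq> 0"
  shows "(\<phi> (norm x) - \<phi> (norm y)) * (norm x - norm y)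
           + (norm y * \<phi> (norm x) + norm x * \<phi> (norm y)) * (2 - norm (sgn x + sgn y))
         \<le> blinfun_apply (xs - ys) (x - y)"
proof -
  have "blinfun_apply xs (sgn x + sgn y) \<le> \<phi> (norm x) * norm (sgn x + sgn y)"
    using duality_map_apply_le[OF assms(1)] .
  then have xy: "blinfun_apply xs (sgn y) \<le> \<phi> (norm x) * (norm (sgn x + sgn y) - 1)"
    using duality_map_apply_sgn[OF assms(1,3)] by (simp add: blinfun.add_right algebra_simps)
  have "blinfun_apply ys (sgn x + sgn y) \<le> \<phi> (norm y) * norm (sgn x + sgn y)"
    using duality_map_apply_le[OF assms(2)] .
  then have yx: "blinfun_apply ys (sgn x) \<le> \<phi> (norm y) * (norm (sgn x + sgn y) - 1)"
    using duality_map_apply_sgn[OF assms(2,4)] by (simp add: blinfun.add_right algebra_simps)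
  have "blinfun_apply xs y = norm y * blinfun_apply xs (sgn y)" "blinfun_apply ys x = norm x * blinfun_apply ys (sgn x)"
    using assms(3,4) by (simp_all add: sgn_div_norm blinfun.scaleR_right)
  then have "blinfun_apply xs y \<le> norm y * (\<phi> (norm x) * (norm (sgn x + sgn y) - 1))"
            "blinfun_apply ys x \<le> norm x * (\<phi> (norm y) * (norm (sgn x + sgn y) - 1))"
    using xy yx by (simp_all add: mult_left_mono)
  then show ?thesis
    using duality_map_apply_self[OF assms(1)] duality_map_apply_self[OF assms(2)]
    by (simp add: blinfun.diff_left blinfun.diff_right algebra_simps)
qed

lemma norm_diff_le_norm_mult_sgn_diff:
  fixes x y :: "'a::real_normed_vector"
  shows "norm (x - y) \<le> norm x * norm (sgn x - sgn y) + \<bar>norm x - norm y\<bar>"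
proof -
  have norm_scaleR_sgn: "norm z *\<^sub>R sgn z = z" for z :: 'a
    by (cases "z = 0") (simp_all add: sgn_div_norm)
  have "x - y = norm x *\<^sub>R (sgn x - sgn y) + (norm x - norm y) *\<^sub>R sgn y"
    by (simp add: scaleR_diff_left scaleR_diff_right norm_scaleR_sgn)
  then have "norm (x - y) \<le> norm (norm x *\<^sub>R (sgn x - sgn y)) + norm ((norm x - norm y) *\<^sub>R sgn y)"
    by (metis norm_triangle_ineq)
  also have "\<dots> \<le> norm x * norm (sgn x - sgn y) + \<bar>norm x - norm y\<bar>"
    by (simp add: norm_sgn)
  finally show ?thesis .
qed

lemma norm_sgn_diff_ge:
  fixes x y :: "'a::real_normed_vector"
  assumes "x \<noteq> 0" "\<bar>norm x - norm y\<bar> \<le> r / 2" "r \<le> norm (x - y)"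
  shows "r / (2 * norm x) \<le> norm (sgn x - sgn y)"
proof -
  have "r / 2 \<le> norm x * norm (sgn x - sgn y)"
    using norm_diff_le_norm_mult_sgn_diff[of x y] assms(2,3) by linarith
  then show ?thesis using assms(1) by (simp add: divide_le_eq mult.commute)
qed

lemma duality_map_gap_of_sgn_sum:
  assumes "gauge_function \<phi>" "xs \<in> duality_map \<phi> x" "ys \<in> duality_map \<phi> y"
    and "y \<noteq> 0" "norm y / 2 < norm x" "0 \<le> \<delta>" "norm (sgn x + sgn y) \<le> 2 * (1 - \<delta>)"
  shows "\<delta> * norm y * \<phi> (norm y) \<le> blinfun_apply (xs - ys) (x - y)"
proof -
  define a b where "a = norm x" and "b = norm y"
  have ab: "0 < b" "b < 2 * a" "0 \<le> \<phi> a" "0 < \<phi> b"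
    using assms gauge_function_nonneg[OF assms(1), of a] gauge_function_pos[OF assms(1), of b]
    by (auto simp: a_def b_def)
  then have "x \<noteq> 0" by (auto simp: a_def)
  have "(b * \<phi> a + a * \<phi> b) * (2 * \<delta>) \<le> (b * \<phi> a + a * \<phi> b) * (2 - norm (sgn x + sgn y))"
    using assms(7) ab by (intro mult_left_mono) auto
  moreover have "0 \<le> (\<phi> a - \<phi> b) * (a - b)"
    using gauge_function_diff_mult_nonneg[OF assms(1)] by (simp add: a_def b_def)
  ultimately have "(b * \<phi> a + a * \<phi> b) * (2 * \<delta>) \<le> blinfun_apply (xs - ys) (x - y)"
    using duality_map_monotone_sgn[OF assms(2,3) \<open>x \<noteq> 0\<close> assms(4)] by (simp add: a_def b_def)
  moreover have "\<delta> * (b * \<phi> b) \<le> \<delta> * (2 * a * \<phi> b)" "0 \<le> \<delta> * b * \<phi> a"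
    using ab assms(6) by (auto intro!: mult_left_mono mult_right_mono)
  ultimately show ?thesis by (simp add: a_def b_def algebra_simps)
qed

lemma duality_map_gap_from_zero:
  assumes "gauge_function \<phi>" "0 < r" "r \<le> norm x" "xs \<in> duality_map \<phi> x" "ys \<in> duality_map \<phi> 0"
  shows "\<phi> r * r \<le> blinfun_apply (xs - ys) x"
proof -
  have "\<phi> r * r \<le> \<phi> (norm x) * norm x"
    using assms gauge_function_le[OF assms(1), of r "norm x"] gauge_function_pos[OF assms(1,2)]
    by (intro mult_mono) auto
  then show ?thesis
    using duality_map_zero[OF assms(1,5)] duality_map_apply_self[OF assms(4)] by simp
qed

lemma duality_map_gap_from_nonzero:
  fixes x0 :: "'a::banach"
  assumes luc: "locally_uniformly_convex TYPE('a)" and \<phi>: "gauge_function \<phi>"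
    and "x0 \<noteq> 0" "0 < r"
  shows "\<exists>c>0. \<forall>x xs ys. r \<le> norm (x - x0) \<and> xs \<in> duality_map \<phi> x \<and> ys \<in> duality_map \<phi> x0
           \<longrightarrow> c \<le> blinfun_apply (xs - ys) (x - x0)"
proof -
  define b where "b = norm x0"
  define \<eta> where "\<eta> = min (r / 2) (b / 2)"
  define m where "m = min (\<phi> (b + \<eta>) - \<phi> b) (\<phi> b - \<phi> (b - \<eta>))"
  define \<epsilon> where "\<epsilon> = min 2 (r / (4 * b))"
  have b: "0 < b" and \<eta>: "0 < \<eta>" "\<eta> \<le> r / 2" "\<eta> \<le> b / 2"
    using assms by (auto simp: b_def \<eta>_def)
  have m: "0 < m"
    using gauge_function_less[OF \<phi>, of b "b + \<eta>"] gauge_function_less[OF \<phi>, of "b - \<eta>" b] b \<eta>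
    by (auto simp: m_def)
  have "0 < \<epsilon>" "\<epsilon> \<le> 2" "norm (sgn x0) = 1"
    using assms b by (auto simp: \<epsilon>_def norm_sgn)
  then obtain \<delta> where \<delta>: "0 < \<delta>"
    and uniform: "\<And>u. norm u = 1 \<Longrightarrow> \<epsilon> \<le> norm (u - sgn x0) \<Longrightarrow> norm (u + sgn x0) \<le> 2 * (1 - \<delta>)"
    using luc unfolding locally_uniformly_convex_def by blast
  have "0 < \<phi> b" using gauge_function_pos[OF \<phi> b] .
  show ?thesis
  proof (intro exI[of _ "min (m * \<eta>) (\<delta> * b * \<phi> b)"] conjI allI impI)
    show "0 < min (m * \<eta>) (\<delta> * b * \<phi> b)" using m \<eta> \<delta> b \<open>0 < \<phi> b\<close> by simp
    fix x xs ys assume "r \<le> norm (x - x0) \<and> xs \<in> duality_map \<phi> x \<and> ys \<in> duality_map \<phi> x0"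
    then have r: "r \<le> norm (x - x0)" and xs: "xs \<in> duality_map \<phi> x" and ys: "ys \<in> duality_map \<phi> x0"
      by auto
    define a where "a = norm x"
    have mono: "(\<phi> a - \<phi> b) * (a - b) \<le> blinfun_apply (xs - ys) (x - x0)"
      using duality_map_monotone[OF xs ys] by (simp add: a_def b_def)
    consider "\<eta> \<le> \<bar>a - b\<bar>" | "\<bar>a - b\<bar> < \<eta>" by linarith
    then show "min (m * \<eta>) (\<delta> * b * \<phi> b) \<le> blinfun_apply (xs - ys) (x - x0)"
    proof cases
      case 1
      then have "m * \<eta> \<le> (\<phi> a - \<phi> b) * (a - b)"
        using gauge_function_diff_mult_ge[OF \<phi>, of a \<eta> b] \<eta> by (simp add: a_def m_def)
      then show ?thesis using mono by linarith
    next
      case 2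
      then have a: "b / 2 < a" "a < 3 * b / 2" using \<eta> by auto
      then have "x \<noteq> 0" using b by (auto simp: a_def)
      have "r / (4 * b) \<le> r / (2 * a)"
        using a b \<open>0 < r\<close> by (intro divide_left_mono) auto
      also have "\<dots> \<le> norm (sgn x - sgn x0)"
        using norm_sgn_diff_ge[OF \<open>x \<noteq> 0\<close>, of x0 r] 2 \<eta> r by (simp add: a_def b_def)
      finally have "r / (4 * b) \<le> norm (sgn x - sgn x0)" .
      then have "norm (sgn x + sgn x0) \<le> 2 * (1 - \<delta>)"
        using uniform \<open>x \<noteq> 0\<close> by (simp add: \<epsilon>_def norm_sgn)
      then have "\<delta> * b * \<phi> b \<le> blinfun_apply (xs - ys) (x - x0)"
        using duality_map_gap_of_sgn_sum[OF \<phi> xs ys \<open>x0 \<noteq> 0\<close>] a \<delta> by (simp add: a_def b_def)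
      then show ?thesis by linarith
    qed
  qed
qed

lemma duality_map_gap_bounded_below:
  fixes x0 :: "'a::banach"
  assumes "locally_uniformly_convex TYPE('a)" "gauge_function \<phi>" "0 < r"
  shows "\<exists>c>0. \<forall>x xs ys. r \<le> norm (x - x0) \<and> xs \<in> duality_map \<phi> x \<and> ys \<in> duality_map \<phi> x0
           \<longrightarrow> c \<le> blinfun_apply (xs - ys) (x - x0)"
proof (cases "x0 = 0")
  case True
  have "0 < \<phi> r * r" using gauge_function_pos[OF assms(2,3)] assms(3) by simp
  with True show ?thesis using duality_map_gap_from_zero[OF assms(2,3)] by auto
next
  case False
  show ?thesis by (rule duality_map_gap_from_nonzero[OF assms(1,2) False assms(3)])
qed

lemma positive_mono_minorant:
  fixes P :: "real \<Rightarrow> real \<Rightarrow> bool"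
  assumes "0 < R" and bounded_below: "\<And>r. 0 < r \<Longrightarrow> \<exists>c>0. \<forall>t v. P t v \<and> r \<le> t \<longrightarrow> c \<le> v"
  shows "\<exists>\<psi>. mono_on {0..} \<psi> \<and> (\<forall>r\<ge>0. 0 \<le> \<psi> r) \<and> \<psi> 0 = 0 \<and> (\<forall>r>0. 0 < \<psi> r) \<and>
           (\<forall>t v. P t v \<and> 0 < t \<and> t \<le> R \<longrightarrow> \<psi> t * t \<le> v)"
proof -
  define V where "V r = insert 1 {v. \<exists>t. P t v \<and> r \<le> t}" for r
  define \<psi> where "\<psi> r = (if r \<le> 0 then 0 else Inf (V r) / R)" for r
  have V_bound: "\<exists>c>0. \<forall>v\<in>V r. c \<le> v" if r: "0 < r" for r
  proof -
    obtain c where "0 < c" "\<forall>t v. P t v \<and> r \<le> t \<longrightarrow> c \<le> v" using bounded_below[OF r] by blast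
    then show ?thesis by (intro exI[of _ "min c 1"]) (auto simp: V_def intro: min.coboundedI1)
  qed
  then have bdd: "bdd_below (V r)" if "0 < r" for r
    using that unfolding bdd_below_def by fastforce
  have Inf_pos: "0 < Inf (V r)" if r: "0 < r" for r
  proof -
    obtain c where "0 < c" "\<forall>v\<in>V r. c \<le> v" using V_bound[OF r] by blast
    then show ?thesis using cInf_greatest[of "V r" c] by (force simp: V_def)
  qed
  have "mono_on {0..} \<psi>"
  proof (rule mono_onI)
    fix r s :: real assume "r \<in> {0..}" "s \<in> {0..}" "r \<le> s"
    show "\<psi> r \<le> \<psi> s"
    proof (cases "r = 0")
      case True then show ?thesis using Inf_pos[of s] \<open>0 < R\<close> by (simp add: \<psi>_def not_le less_imp_le)
    next
      case False
      then have "0 < r" using \<open>r \<in> {0..}\<close> by simp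
      have "V s \<subseteq> V r" using \<open>r \<le> s\<close> by (auto simp: V_def)
      then have "Inf (V r) \<le> Inf (V s)" by (intro cInf_superset_mono bdd \<open>0 < r\<close>) (auto simp: V_def)
      then show ?thesis using \<open>0 < r\<close> \<open>r \<le> s\<close> \<open>0 < R\<close> by (simp add: \<psi>_def divide_right_mono)
    qed
  qed
  moreover have pos: "0 < \<psi> r" if "0 < r" for r using Inf_pos[OF that] that \<open>0 < R\<close> by (simp add: \<psi>_def)
  moreover have "0 \<le> \<psi> r" if "0 \<le> r" for r using pos[of r] that by (cases "r = 0") (auto simp: \<psi>_def)
  moreover have "\<psi> 0 = 0" by (simp add: \<psi>_def)
  moreover have "\<psi> t * t \<le> v" if "P t v" "0 < t" "t \<le> R" for t v
  proof -
    have "v \<in> V t" using that by (auto simp: V_def)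
    then have "Inf (V t) \<le> v" by (intro cInf_lower bdd \<open>0 < t\<close>)
    then have "\<psi> t * t \<le> v / R * t" using that \<open>0 < R\<close> by (simp add: \<psi>_def divide_right_mono)
    also have "\<dots> \<le> v"
    proof -
      have "v * t \<le> v * R"
        using Inf_pos[OF \<open>0 < t\<close>] \<open>Inf (V t) \<le> v\<close> \<open>t \<le> R\<close> by (intro mult_left_mono) auto
      then show ?thesis using \<open>0 < R\<close> by (simp add: pos_divide_le_eq)
    qed
    finally show ?thesis .
  qed
  ultimately show ?thesis by blast
qed

theorem theorem2:
  fixes \<phi> :: "real \<Rightarrow> real"
  assumes "locally_uniformly_convex TYPE('a::banach)"
    and "gauge_function \<phi>"
  shows "\<forall>R>0. \<forall>x0::'a. \<exists>\<psi>::real \<Rightarrow> real.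
           mono_on {0..} \<psi> \<and> (\<forall>r\<ge>0. \<psi> r \<ge> 0) \<and> \<psi> 0 = 0 \<and> (\<forall>r>0. \<psi> r > 0) \<and>
           (\<forall>x::'a. norm (x - x0) \<le> R \<longrightarrow>
              (\<forall>xs\<in>duality_map \<phi> x. \<forall>x0s\<in>duality_map \<phi> x0.
                 blinfun_apply (xs - x0s) (x - x0) \<ge> \<psi> (norm (x - x0)) * norm (x - x0)))"
proof (intro allI impI)
  fix R :: real and x0 :: 'a
  assume "0 < R"
  define P where "P t v \<longleftrightarrow> (\<exists>x xs ys. t = norm (x - x0) \<and> v = blinfun_apply (xs - ys) (x - x0) \<and>
                               xs \<in> duality_map \<phi> x \<and> ys \<in> duality_map \<phi> x0)" for t v
  have bounded_below: "\<exists>c>0. \<forall>t v. P t v \<and> r \<le> t \<longrightarrow> c \<le> v" if r: "0 < r" for r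
  proof -
    obtain c where "0 < c" and "\<forall>x xs ys. r \<le> norm (x - x0) \<and> xs \<in> duality_map \<phi> x \<and>
        ys \<in> duality_map \<phi> x0 \<longrightarrow> c \<le> blinfun_apply (xs - ys) (x - x0)"
      using duality_map_gap_bounded_below[OF assms r, of x0] by blast
    then show ?thesis by (intro exI[of _ c]) (auto simp: P_def)
  qed
  obtain \<psi> where \<psi>: "mono_on {0..} \<psi>" "\<forall>r\<ge>0. 0 \<le> \<psi> r" "\<psi> 0 = 0" "\<forall>r>0. 0 < \<psi> r"
    and minorant: "\<And>t v. P t v \<Longrightarrow> 0 < t \<Longrightarrow> t \<le> R \<Longrightarrow> \<psi> t * t \<le> v"
    using positive_mono_minorant[OF \<open>0 < R\<close> bounded_below] by blast
  have bound: "\<psi> (norm (x - x0)) * norm (x - x0) \<le> blinfun_apply (xs - ys) (x - x0)"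
    if "norm (x - x0) \<le> R" "xs \<in> duality_map \<phi> x" "ys \<in> duality_map \<phi> x0" for x xs ys
  proof (cases "x = x0")
    case False
    then show ?thesis using that by (intro minorant) (auto simp: P_def)
  qed simp
  show "\<exists>\<psi>. mono_on {0..} \<psi> \<and> (\<forall>r\<ge>0. \<psi> r \<ge> 0) \<and> \<psi> 0 = 0 \<and> (\<forall>r>0. \<psi> r > 0) \<and>
           (\<forall>x. norm (x - x0) \<le> R \<longrightarrow>
              (\<forall>xs\<in>duality_map \<phi> x. \<forall>x0s\<in>duality_map \<phi> x0.
                 blinfun_apply (xs - x0s) (x - x0) \<ge> \<psi> (norm (x - x0)) * norm (x - x0)))"
  proof (intro exI[of _ \<psi>] conjI allI impI ballI)
    fix x xs x0s assume "norm (x - x0) \<le> R" "xs \<in> duality_map \<phi> x" "x0s \<in> duality_map \<phi> x0"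
    then show "\<psi> (norm (x - x0)) * norm (x - x0) \<le> blinfun_apply (xs - x0s) (x - x0)" by (rule bound)
  qed (use \<psi> in auto)
qed

end
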